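(* Let $P$ be a well-quasi-ordered poset. Then $\mathcal{J}(P)$, as a subspace of $\mathfrak{P}(P)$, is a compact scattered space, and its set of isolated points is exactly $\{\downarrow x: x\in P\}$, the set of principal ideals.
   Context: $\mathfrak{P}(P)$ is the power set of $P$ with the topology whose basic open sets are $O(F,G)=\{X\subseteq P: F\subseteq X,\ G\cap X=\emptyset\}$ for finite $F,G\subseteq P$ (the product topology on $2^P$). $\mathcal{J}(P)$ is the set of ideals of $P$: nonempty initial segments (closed downward) which are up-directed (any two elements have an upper bound in the set). $\downarrow x=\{y\in P: y\leq x\}$. A space is scattered if every nonempty subset has a point isolated in the induced topology. Well-quasi-ordered means well-founded with no infinite antichain. *)

theory Defs
  imports "HOL-Analysis.Analysis"
begin

definition basic_open :: "'a set \<Rightarrow> 'a set \<Rightarrow> 'a set \<Rightarrow> 'a set set" where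
  "basic_open P F G = {X. X \<subseteq> P \<and> F \<subseteq> X \<and> G \<inter> X = {}}"

definition powerset_topology :: "'a set \<Rightarrow> 'a set topology" where
  "powerset_topology P = topology_generated_by
     {basic_open P F G | F G. finite F \<and> F \<subseteq> P \<and> finite G \<and> G \<subseteq> P}"

definition ideals :: "'a::order set \<Rightarrow> 'a set set" where
  "ideals P = {I. I \<subseteq> P \<and> I \<noteq> {}
      \<and> (\<forall>x\<in>I. \<forall>y\<in>P. y \<le> x \<longrightarrow> y \<in> I)
      \<and> (\<forall>x\<in>I. \<forall>y\<in>I. \<exists>z\<in>I. x \<le> z \<and> y \<le> z)}"

definition down :: "'a::order set \<Rightarrow> 'a \<Rightarrow> 'a set" where
  "down P x = {y\<in>P. y \<le> x}"

definition wqo_on :: "'a::order set \<Rightarrow> bool" where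
  "wqo_on P \<longleftrightarrow> wf {(x, y). x \<in> P \<and> y \<in> P \<and> x < y}
     \<and> (\<forall>A \<subseteq> P. (\<forall>x\<in>A. \<forall>y\<in>A. x \<noteq> y \<longrightarrow> \<not> x \<le> y \<and> \<not> y \<le> x) \<longrightarrow> finite A)"

definition isolated_points :: "'b topology \<Rightarrow> 'b set" where
  "isolated_points X = {x \<in> topspace X. openin X {x}}"

definition scattered_space :: "'b topology \<Rightarrow> bool" where
  "scattered_space X \<longleftrightarrow>
     (\<forall>S \<subseteq> topspace X. S \<noteq> {} \<longrightarrow> (\<exists>x\<in>S. openin (subtopology X S) {x}))"

end

theory Submission
  imports Defs
begin

text \<open>In a wqo every upward closed subset is generated by its finitely many minimal
  elements, and downsets satisfy the descending chain condition. So for each I there is a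
  finite G \<subseteq> P - I such that every downset avoiding G lies below I. The basic neighbourhood
  O(\<emptyset>, G) then isolates a \<subseteq>-minimal ideal I within any family of ideals, which gives
  scatteredness, and O({x}, G) isolates the principal ideal of x. Conversely, if O(F, G)
  isolates an ideal I, the principal ideal of an upper bound u \<in> I of F lies in O(F, G),
  so I is principal.

  Compactness follows by well-founded induction over downsets D: the ideals below D are
  covered by finitely many members of a given open cover. If D is an ideal, an ideal below D
  that lies outside a basic neighbourhood O(F, G) \<subseteq> U of D misses some f \<in> F, hence
  lies below the smaller downset D - \<up>f. If D is not directed, say x, y \<in> D have no common
  upper bound in D, then every ideal below D lies below D - \<up>x or D - \<up>y.\<close>

definition downset :: "'a::order set \<Rightarrow> 'a set \<Rightarrow> bool" where
  "downset P D \<longleftrightarrow> D \<subseteq> P \<and> (\<forall>x\<in>D. \<forall>y\<in>P. y \<le> x \<longrightarrow> y \<in> D)"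

lemma ideals_imp_downset: "I \<in> ideals P \<Longrightarrow> downset P I"
  by (simp add: ideals_def downset_def)

lemma down_in_ideals: "x \<in> P \<Longrightarrow> down P x \<in> ideals P"
  by (auto simp: down_def ideals_def intro: order_trans)

lemma ideal_directed: "\<lbrakk>I \<in> ideals P; x \<in> I; y \<in> I\<rbrakk> \<Longrightarrow> \<exists>z\<in>I. x \<le> z \<and> y \<le> z"
  by (auto simp: ideals_def)

lemma ideal_finite_upper_bound:
  assumes "I \<in> ideals P" "finite F" "F \<subseteq> I"
  obtains u where "u \<in> I" "\<And>f. f \<in> F \<Longrightarrow> f \<le> u"
proof -
  have "\<exists>u\<in>I. \<forall>f\<in>F. f \<le> u"
    using assms(2,3)
  proof (induction F rule: finite_induct)
    case empty
    then show ?case using assms(1) by (auto simp: ideals_def)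
  next
    case (insert a F)
    then obtain u where "u \<in> I" "\<forall>f\<in>F. f \<le> u" by auto
    moreover obtain z where "z \<in> I" "a \<le> z" "u \<le> z"
      using ideal_directed[OF assms(1)] insert.prems \<open>u \<in> I\<close> by blast
    ultimately show ?case by (blast intro: order_trans)
  qed
  then show thesis using that by blast
qed

lemma topspace_powerset_topology: "topspace (powerset_topology P) = Pow P"
proof -
  let ?\<B> = "{basic_open P F G | F G. finite F \<and> F \<subseteq> P \<and> finite G \<and> G \<subseteq> P}"
  have "Pow P = basic_open P {} {}" by (auto simp: basic_open_def)
  then have "Pow P \<in> ?\<B>" by blast
  moreover have "B \<subseteq> Pow P" if "B \<in> ?\<B>" for B
    using that unfolding basic_open_def by blast
  ultimately have "\<Union>?\<B> = Pow P" by (intro subset_antisym Union_least Union_upper)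
  then show ?thesis
    unfolding powerset_topology_def topology_generated_by_topspace .
qed

lemma topspace_subtopology_ideals:
  "topspace (subtopology (powerset_topology P) (ideals P)) = ideals P"
proof -
  have "ideals P \<subseteq> Pow P" by (auto simp: ideals_def)
  then show ?thesis by (simp add: topspace_powerset_topology inf.absorb2)
qed

lemma openin_basic_open:
  "\<lbrakk>finite F; F \<subseteq> P; finite G; G \<subseteq> P\<rbrakk> \<Longrightarrow> openin (powerset_topology P) (basic_open P F G)"
  unfolding powerset_topology_def by (rule topology_generated_by_Basis) blast

lemma basic_open_Int:
  "basic_open P F G \<inter> basic_open P F' G' = basic_open P (F \<union> F') (G \<union> G')"
  by (auto simp: basic_open_def)

lemma openin_topology_generated_by_Int_closed_base:
  assumes "\<And>B C. B \<in> \<B> \<Longrightarrow> C \<in> \<B> \<Longrightarrow> B \<inter> C \<in> \<B>"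
    and "openin (topology_generated_by \<B>) U" "x \<in> U"
  shows "\<exists>B\<in>\<B>. x \<in> B \<and> B \<subseteq> U"
  using openin_topology_generated_by[OF assms(2)] assms(3)
proof (induction arbitrary: x)
  case (Int a b)
  then obtain B C where "B \<in> \<B>" "x \<in> B" "B \<subseteq> a" "C \<in> \<B>" "x \<in> C" "C \<subseteq> b"
    by (metis IntD1 IntD2)
  then show ?case using assms(1) by (metis Int_iff Int_mono)
next
  case (UN K)
  then show ?case by (meson UnionE Union_upper order_trans)
qed auto

lemma openin_powerset_topology_basic_open:
  assumes "openin (powerset_topology P) U" "X \<in> U"
  obtains F G where "finite F" "F \<subseteq> P" "finite G" "G \<subseteq> P"
    "X \<in> basic_open P F G" "basic_open P F G \<subseteq> U"
proof -
  let ?\<B> = "{basic_open P F G | F G. finite F \<and> F \<subseteq> P \<and> finite G \<and> G \<subseteq> P}"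
  have "B \<inter> C \<in> ?\<B>" if BC: "B \<in> ?\<B>" "C \<in> ?\<B>" for B C
  proof -
    obtain F G F' G' where "B = basic_open P F G" "C = basic_open P F' G'"
      "finite F" "F \<subseteq> P" "finite G" "G \<subseteq> P" "finite F'" "F' \<subseteq> P" "finite G'" "G' \<subseteq> P"
      using BC by blast
    then show ?thesis
      by (intro CollectI exI[of _ "F \<union> F'"] exI[of _ "G \<union> G'"]) (simp add: basic_open_Int)
  qed
  with assms have "\<exists>B\<in>?\<B>. X \<in> B \<and> B \<subseteq> U"
    unfolding powerset_topology_def by (intro openin_topology_generated_by_Int_closed_base)
  then show thesis using that by blast
qed

lemma openin_singleton_basic_open:
  assumes "finite F" "F \<subseteq> P" "finite G" "G \<subseteq> P" "basic_open P F G \<inter> S = {I}"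
  shows "openin (subtopology (powerset_topology P) S) {I}"
  using openin_subtopology_Int[OF openin_basic_open[OF assms(1-4)], of S] assms(5) by simp

lemma wqo_on_finite_basis:
  assumes "wqo_on P" "U \<subseteq> P"
  obtains G where "finite G" "G \<subseteq> U" "\<And>u. u \<in> U \<Longrightarrow> \<exists>g\<in>G. g \<le> u"
proof
  let ?G = "{g\<in>U. \<not> (\<exists>u\<in>U. u < g)}"
  have "?G \<subseteq> P" using assms(2) by blast
  moreover have "\<forall>x\<in>?G. \<forall>y\<in>?G. x \<noteq> y \<longrightarrow> \<not> x \<le> y \<and> \<not> y \<le> x"
    by (auto simp: order.order_iff_strict)
  ultimately show "finite ?G"
    using assms(1) unfolding wqo_on_def by blast
  show "?G \<subseteq> U" by blast
  fix u assume "u \<in> U"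
  have wf: "wf {(x, y). x \<in> P \<and> y \<in> P \<and> x < y}"
    using assms(1) unfolding wqo_on_def by blast
  obtain v where "v \<in> {v\<in>U. v \<le> u}"
    and min: "\<And>w. (w, v) \<in> {(x, y). x \<in> P \<and> y \<in> P \<and> x < y} \<Longrightarrow> w \<notin> {v\<in>U. v \<le> u}"
    using wfE_min[OF wf, of u "{v\<in>U. v \<le> u}"] \<open>u \<in> U\<close> by blast
  then have v: "v \<in> U" "v \<le> u" by auto
  have "\<not> w < v" if "w \<in> U" for w
  proof
    assume "w < v"
    then have "(w, v) \<in> {(x, y). x \<in> P \<and> y \<in> P \<and> x < y}" and "w \<le> u"
      using that v assms(2) by auto
    then show False using min that by blast
  qed
  then show "\<exists>g\<in>?G. g \<le> u" using v by blast
qed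

lemma wqo_on_downset_test_set:
  assumes "wqo_on P"
  obtains G where "finite G" "G \<subseteq> P - I" "\<And>K. downset P K \<Longrightarrow> G \<inter> K = {} \<Longrightarrow> K \<subseteq> I"
proof -
  obtain G where G: "finite G" "G \<subseteq> P - I" and basis: "\<And>u. u \<in> P - I \<Longrightarrow> \<exists>g\<in>G. g \<le> u"
    using wqo_on_finite_basis[OF assms, of "P - I"] by blast
  have "K \<subseteq> I" if K: "downset P K" "G \<inter> K = {}" for K
  proof
    fix z assume "z \<in> K"
    show "z \<in> I"
    proof (rule ccontr)
      assume "z \<notin> I"
      then obtain g where "g \<in> G" "g \<le> z"
        using basis K(1) \<open>z \<in> K\<close> unfolding downset_def by blast
      then have "g \<in> K"
        using G(2) K(1) \<open>z \<in> K\<close> unfolding downset_def by blast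
      then show False using K(2) \<open>g \<in> G\<close> by blast
    qed
  qed
  then show thesis using that G by blast
qed

lemma wf_psubset_downsets:
  assumes "wqo_on P"
  shows "wf {(D, E). downset P D \<and> downset P E \<and> D \<subset> E}"
proof (rule ccontr)
  assume "\<not> ?thesis"
  then obtain f where "\<And>i. (f (Suc i), f i) \<in> {(D, E). downset P D \<and> downset P E \<and> D \<subset> E}"
    unfolding wf_iff_no_infinite_down_chain by blast
  then have f: "\<And>i. downset P (f i)" "\<And>i. f (Suc i) \<subset> f i" by auto
  then have antimono: "f j \<subseteq> f i" if "i \<le> j" for i j
    using lift_Suc_antimono_le[of f] that by blast
  obtain G where G: "finite G" "G \<subseteq> P - (\<Inter>i. f i)"
    and below: "\<And>K. downset P K \<Longrightarrow> G \<inter> K = {} \<Longrightarrow> K \<subseteq> (\<Inter>i. f i)"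
    using wqo_on_downset_test_set[OF assms] by blast
  have "\<exists>N. G \<inter> f N = {}"
    using G
  proof (induction G rule: finite_induct)
    case (insert g G)
    then obtain N i where "G \<inter> f N = {}" "g \<notin> f i" by blast
    then have "insert g G \<inter> f (max N i) = {}"
      using antimono[of N "max N i"] antimono[of i "max N i"] by auto
    then show ?case ..
  qed simp
  then obtain N where "G \<inter> f N = {}" ..
  then have "f N \<subseteq> f (Suc N)" using below[OF f(1)] by blast
  then show False using f(2)[of N] by blast
qed

lemma ideals_below_downset_split:
  assumes "\<forall>U\<in>\<U>. openin (powerset_topology P) U" "ideals P \<subseteq> \<Union>\<U>" "downset P D"
  obtains F \<V> where "finite F" "F \<subseteq> D" "finite \<V>" "\<V> \<subseteq> \<U>"
    "\<And>I. I \<in> ideals P \<Longrightarrow> I \<subseteq> D \<Longrightarrow> I \<in> \<Union>\<V> \<or> \<not> F \<subseteq> I"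
proof (cases "D \<in> ideals P")
  case True
  then obtain U where U: "U \<in> \<U>" "D \<in> U" using assms(2) by blast
  then have "openin (powerset_topology P) U" using assms(1) by blast
  then obtain F G where FG: "finite F" "F \<subseteq> P" "finite G" "G \<subseteq> P"
    "D \<in> basic_open P F G" "basic_open P F G \<subseteq> U"
    using U(2) by (rule openin_powerset_topology_basic_open)
  have "I \<in> U" if "I \<in> ideals P" "I \<subseteq> D" "F \<subseteq> I" for I
  proof -
    have "I \<subseteq> P" using that(1) by (simp add: ideals_def)
    then have "I \<in> basic_open P F G"
      using that(2,3) FG(5) unfolding basic_open_def by blast
    then show ?thesis using FG(6) by blast
  qed
  moreover have "F \<subseteq> D" using FG(5) by (simp add: basic_open_def)
  ultimately show thesis
    using that[of F "{U}"] FG(1) U(1) by blast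
next
  case False
  then have "D = {} \<or> (\<exists>x\<in>D. \<exists>y\<in>D. \<not> (\<exists>z\<in>D. x \<le> z \<and> y \<le> z))"
    using assms(3) unfolding ideals_def downset_def by auto
  then consider "D = {}" | x y where "x \<in> D" "y \<in> D" "\<not> (\<exists>z\<in>D. x \<le> z \<and> y \<le> z)"
    by blast
  then show thesis
  proof cases
    case 1
    then show thesis using that[of "{}" "{}"] by (auto simp: ideals_def)
  next
    case 2
    have "\<not> {x, y} \<subseteq> I" if I: "I \<in> ideals P" "I \<subseteq> D" for I
    proof
      assume "{x, y} \<subseteq> I"
      then obtain z where "z \<in> I" "x \<le> z" "y \<le> z"
        using ideal_directed[OF I(1)] by blast
      then show False using I(2) 2(3) by blast
    qed
    then show thesis using that[of "{x, y}" "{}"] 2 by blast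
  qed
qed

lemma downset_without_upset: "downset P D \<Longrightarrow> downset P {z \<in> D. \<not> f \<le> z}"
  unfolding downset_def by (blast intro: order_trans)

lemma ideals_below_downset_finite_subcover:
  assumes "wqo_on P" "\<forall>U\<in>\<U>. openin (powerset_topology P) U" "ideals P \<subseteq> \<Union>\<U>"
    and "downset P D"
  shows "\<exists>\<V>. finite \<V> \<and> \<V> \<subseteq> \<U> \<and> {I \<in> ideals P. I \<subseteq> D} \<subseteq> \<Union>\<V>"
  using assms(4)
proof (induction D rule: wf_induct_rule[OF wf_psubset_downsets[OF assms(1)]])
  case (1 D)
  obtain F \<V> where F: "finite F" "F \<subseteq> D" and \<V>: "finite \<V>" "\<V> \<subseteq> \<U>"
    and reduce: "\<And>I. I \<in> ideals P \<Longrightarrow> I \<subseteq> D \<Longrightarrow> I \<in> \<Union>\<V> \<or> \<not> F \<subseteq> I"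
    using ideals_below_downset_split[OF assms(2,3) "1.prems"] by blast
  have "\<forall>f\<in>F. \<exists>\<W>. finite \<W> \<and> \<W> \<subseteq> \<U> \<and> {I \<in> ideals P. I \<subseteq> {z \<in> D. \<not> f \<le> z}} \<subseteq> \<Union>\<W>"
  proof
    fix f assume "f \<in> F"
    have "downset P {z \<in> D. \<not> f \<le> z}"
      using "1.prems" by (rule downset_without_upset)
    moreover have "{z \<in> D. \<not> f \<le> z} \<subset> D"
      using F(2) \<open>f \<in> F\<close> by blast
    ultimately show "\<exists>\<W>. finite \<W> \<and> \<W> \<subseteq> \<U> \<and> {I \<in> ideals P. I \<subseteq> {z \<in> D. \<not> f \<le> z}} \<subseteq> \<Union>\<W>"
      using "1.IH"[of "{z \<in> D. \<not> f \<le> z}"] "1.prems" by blast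
  qed
  then obtain \<W> where \<W>: "\<forall>f\<in>F. finite (\<W> f) \<and> \<W> f \<subseteq> \<U> \<and>
      {I \<in> ideals P. I \<subseteq> {z \<in> D. \<not> f \<le> z}} \<subseteq> \<Union>(\<W> f)"
    by (rule exE[OF bchoice])
  have "{I \<in> ideals P. I \<subseteq> D} \<subseteq> \<Union>(\<V> \<union> (\<Union>f\<in>F. \<W> f))"
  proof
    fix I assume I: "I \<in> {I \<in> ideals P. I \<subseteq> D}"
    show "I \<in> \<Union>(\<V> \<union> (\<Union>f\<in>F. \<W> f))"
    proof (cases "I \<in> \<Union>\<V>")
      case False
      then obtain f where "f \<in> F" "f \<notin> I" using reduce I by blast
      have "I \<subseteq> {z \<in> D. \<not> f \<le> z}"
      proof
        fix z assume "z \<in> I"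
        have "f \<in> P" using "1.prems" F(2) \<open>f \<in> F\<close> unfolding downset_def by blast
        then have "\<not> f \<le> z"
          using ideals_imp_downset[of I P] I \<open>z \<in> I\<close> \<open>f \<notin> I\<close> unfolding downset_def by blast
        then show "z \<in> {z \<in> D. \<not> f \<le> z}" using I \<open>z \<in> I\<close> by blast
      qed
      moreover have "{I \<in> ideals P. I \<subseteq> {z \<in> D. \<not> f \<le> z}} \<subseteq> \<Union>(\<W> f)"
        using \<W> \<open>f \<in> F\<close> by blast
      ultimately have "I \<in> \<Union>(\<W> f)" using I by blast
      then show ?thesis using \<open>f \<in> F\<close> by blast
    qed blast
  qed
  moreover have "finite (\<V> \<union> (\<Union>f\<in>F. \<W> f))" "\<V> \<union> (\<Union>f\<in>F. \<W> f) \<subseteq> \<U>"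
    using F(1) \<V> \<W> by auto
  ultimately show ?case by blast
qed

lemma compactin_ideals:
  assumes "wqo_on P"
  shows "compactin (powerset_topology P) (ideals P)"
  unfolding compactin_def
proof (intro conjI allI impI)
  show "ideals P \<subseteq> topspace (powerset_topology P)"
    using topspace_subtopology_ideals[of P] by auto
  fix \<U> assume \<U>: "(\<forall>U\<in>\<U>. openin (powerset_topology P) U) \<and> ideals P \<subseteq> \<Union>\<U>"
  have "downset P P" by (simp add: downset_def)
  moreover have "{I \<in> ideals P. I \<subseteq> P} = ideals P" by (auto simp: ideals_def)
  ultimately show "\<exists>\<F>. finite \<F> \<and> \<F> \<subseteq> \<U> \<and> ideals P \<subseteq> \<Union>\<F>"
    using ideals_below_downset_finite_subcover[OF assms, of \<U> P] \<U> by simp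
qed

lemma scattered_space_ideals:
  assumes "wqo_on P"
  shows "scattered_space (subtopology (powerset_topology P) (ideals P))"
  unfolding scattered_space_def topspace_subtopology_ideals subtopology_subtopology
proof (intro allI impI)
  fix S assume S: "S \<subseteq> ideals P" "S \<noteq> {}"
  then obtain I where "I \<in> S"
    and minimal: "\<And>K. (K, I) \<in> {(D, E). downset P D \<and> downset P E \<and> D \<subset> E} \<Longrightarrow> K \<notin> S"
    using wfE_min[OF wf_psubset_downsets[OF assms]] by blast
  obtain G where G: "finite G" "G \<subseteq> P - I"
    and below: "\<And>K. downset P K \<Longrightarrow> G \<inter> K = {} \<Longrightarrow> K \<subseteq> I"
    using wqo_on_downset_test_set[OF assms] by blast
  have "basic_open P {} G \<inter> (ideals P \<inter> S) = {I}"
  proof (intro equalityI subsetI)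
    fix K assume K: "K \<in> basic_open P {} G \<inter> (ideals P \<inter> S)"
    then have "downset P K" "G \<inter> K = {}"
      using ideals_imp_downset by (auto simp: basic_open_def)
    then have "K \<subseteq> I" by (rule below)
    then show "K \<in> {I}"
      using minimal[of K] K \<open>downset P K\<close> \<open>I \<in> S\<close> S(1) ideals_imp_downset by blast
  next
    fix K assume "K \<in> {I}"
    then show "K \<in> basic_open P {} G \<inter> (ideals P \<inter> S)"
      using \<open>I \<in> S\<close> S(1) G(2) by (auto simp: basic_open_def ideals_def)
  qed
  then have "openin (subtopology (powerset_topology P) (ideals P \<inter> S)) {I}"
    using G by (intro openin_singleton_basic_open) auto
  then show "\<exists>I\<in>S. openin (subtopology (powerset_topology P) (ideals P \<inter> S)) {I}"
    using \<open>I \<in> S\<close> by blast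
qed

lemma down_isolated_in_ideals:
  assumes "wqo_on P" "x \<in> P"
  shows "openin (subtopology (powerset_topology P) (ideals P)) {down P x}"
proof -
  obtain G where G: "finite G" "G \<subseteq> P - down P x"
    and below: "\<And>K. downset P K \<Longrightarrow> G \<inter> K = {} \<Longrightarrow> K \<subseteq> down P x"
    using wqo_on_downset_test_set[OF assms(1)] by blast
  have "basic_open P {x} G \<inter> ideals P = {down P x}"
  proof (intro equalityI subsetI)
    fix K assume K: "K \<in> basic_open P {x} G \<inter> ideals P"
    then have "downset P K" "G \<inter> K = {}" "x \<in> K"
      using ideals_imp_downset by (auto simp: basic_open_def)
    then have "K \<subseteq> down P x" "down P x \<subseteq> K"
      using below unfolding downset_def down_def by auto
    then show "K \<in> {down P x}" by simp
  next
    fix K assume "K \<in> {down P x}"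
    then show "K \<in> basic_open P {x} G \<inter> ideals P"
      using assms(2) G(2) down_in_ideals[OF assms(2)] by (auto simp: basic_open_def down_def)
  qed
  then show ?thesis
    using G assms(2) by (intro openin_singleton_basic_open) auto
qed

lemma isolated_ideal_is_down:
  assumes "I \<in> ideals P" "openin (subtopology (powerset_topology P) (ideals P)) {I}"
  obtains x where "x \<in> P" "I = down P x"
proof -
  obtain T where T: "openin (powerset_topology P) T" "{I} = T \<inter> ideals P"
    using assms(2) unfolding openin_subtopology by blast
  obtain F G where FG: "finite F" "F \<subseteq> P" "finite G" "G \<subseteq> P"
    "I \<in> basic_open P F G" "basic_open P F G \<subseteq> T"
    using T by (metis openin_powerset_topology_basic_open IntD1 singletonI)
  obtain u where u: "u \<in> I" "\<And>f. f \<in> F \<Longrightarrow> f \<le> u"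
    using ideal_finite_upper_bound[OF assms(1) FG(1)] FG(5) by (auto simp: basic_open_def)
  have "u \<in> P" "down P u \<subseteq> I"
    using u(1) ideals_imp_downset[OF assms(1)] unfolding downset_def down_def by auto
  have "F \<subseteq> down P u" using FG(2) u(2) by (auto simp: down_def)
  then have "down P u \<in> basic_open P F G"
    using FG(5) \<open>down P u \<subseteq> I\<close> by (auto simp: basic_open_def down_def)
  then have "down P u \<in> T \<inter> ideals P"
    using FG(6) down_in_ideals[OF \<open>u \<in> P\<close>] by blast
  then show thesis
    using that[of u] \<open>u \<in> P\<close> \<open>{I} = T \<inter> ideals P\<close> by blast
qed

lemma isolated_points_ideals:
  assumes "wqo_on P"
  shows "isolated_points (subtopology (powerset_topology P) (ideals P)) = {down P x | x. x \<in> P}"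
  unfolding isolated_points_def topspace_subtopology_ideals
proof (intro equalityI subsetI)
  fix I assume "I \<in> {I \<in> ideals P. openin (subtopology (powerset_topology P) (ideals P)) {I}}"
  then obtain x where "x \<in> P" "I = down P x"
    using isolated_ideal_is_down by blast
  then show "I \<in> {down P x | x. x \<in> P}" by blast
next
  fix I assume "I \<in> {down P x | x. x \<in> P}"
  then obtain x where "x \<in> P" "I = down P x" by blast
  then show "I \<in> {I \<in> ideals P. openin (subtopology (powerset_topology P) (ideals P)) {I}}"
    using down_in_ideals down_isolated_in_ideals[OF assms] by blast
qed

theorem proposition3p4:
  fixes P :: "'a::order set"
  assumes "wqo_on P"
  shows "compact_space (subtopology (powerset_topology P) (ideals P))
       \<and> scattered_space (subtopology (powerset_topology P) (ideals P))
       \<and> isolated_points (subtopology (powerset_topology P) (ideals P)) = {down P x | x. x \<in> P}"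
  using assms
  by (intro conjI compact_space_subtopology compactin_ideals scattered_space_ideals isolated_points_ideals)

end
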